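(* Let $\mathcal{S}=\{s_1,\dots,s_N\}$ be a finite state space, $\mathcal{A}$ a finite action space and $\gamma\in(0,1)$. Consider the real MDP $\langle\mathcal{S},\mathcal{A},\mathbb{P},R,\gamma\rangle$ and the DT MDP $\langle\mathcal{S},\mathcal{A},\mathbb{P}',R',\gamma\rangle$. Then for every deterministic policy $\pi:\mathcal{S}\to\mathcal{A}$, $$\|V_{\mathrm{real}}^*-V_{\mathrm{real}}^{\pi}\|\le \frac{2}{1-\gamma}\max_i \bar d(s_i,s_i)+\frac{1+\gamma}{1-\gamma}\|V_{\mathrm{DT}}^*-V_{\mathrm{DT}}^{\pi}\|\le \frac{2}{(1-\gamma)^2}\max_i d_{\mathrm{TV}}(s_i,s_i)+\frac{1+\gamma}{1-\gamma}\|V_{\mathrm{DT}}^*-V_{\mathrm{DT}}^{\pi}\|.$$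
   Context: $\mathbb{P}(\cdot|s,a)$ and $\mathbb{P}'(\cdot|s,a)$ are probability distributions on $\mathcal{S}$ for each $(s,a)$; $R,R':\mathcal{S}\times\mathcal{A}\to\mathbb{R}$ are reward functions. For a deterministic policy $\pi$, $V^\pi_{\mathrm{real}}$ is the unique solution of $V(s)=R(s,\pi(s))+\gamma\sum_{\tilde s}\mathbb{P}(\tilde s|s,\pi(s))V(\tilde s)$ for all $s$, and $V^*_{\mathrm{real}}$ the unique solution of $V(s)=\max_a\{R(s,a)+\gamma\sum_{\tilde s}\mathbb{P}(\tilde s|s,a)V(\tilde s)\}$; $V^\pi_{\mathrm{DT}},V^*_{\mathrm{DT}}$ are defined in the same way with $\mathbb{P}',R'$. Define $\|V^*_{\mathrm{real}}-V^\pi_{\mathrm{real}}\|=\max_i\{V^*_{\mathrm{real}}(s_i)-V^\pi_{\mathrm{real}}(s_i)\}$ and similarly $\|V^*_{\mathrm{DT}}-V^\pi_{\mathrm{DT}}\|$. Let $R_{\max}=\max_{i,j,a}|R(s_i,a)-R'(s_j,a)|$. For probability distributions $P,Q$ on $\mathcal{S}$ and a cost $d:\mathcal{S}\times\mathcal{S}\to[0,\infty)$ (not required to vanish on the diagonal; the first argument is regarded as a state of the real MDP and the second as a state of the DT MDP), $W_1(P,Q;d)=\min_{\Lambda}\sum_{i,j}\lambda_{i,j}d(s_i,s_j)$, the minimum over nonnegative $N\times N$ matrices $\Lambda=(\lambda_{i,j})$ with $\sum_j\lambda_{i,j}=P(s_i)$ and $\sum_i\lambda_{i,j}=Q(s_j)$.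 Define $d_0\equiv0$ and $d_n(s_i,s_j)=\max_a\{|R(s_i,a)-R'(s_j,a)|+\gamma W_1(\mathbb{P}(\cdot|s_i,a),\mathbb{P}'(\cdot|s_j,a);d_{n-1})\}$; the DT bisimulation metric $\bar d$ is the pointwise limit (equivalently supremum) of the nondecreasing sequence $d_n$, and it satisfies $\bar d(s_i,s_j)=\max_a\{|R(s_i,a)-R'(s_j,a)|+\gamma W_1(\mathbb{P}(\cdot|s_i,a),\mathbb{P}'(\cdot|s_j,a);\bar d)\}$. With $\mathrm{TV}(P,Q)=\frac12\sum_i|P(s_i)-Q(s_i)|$, define $d_{\mathrm{TV}}(s_i,s_i)=\max_a\{|R(s_i,a)-R'(s_i,a)|+\frac{\gamma R_{\max}}{1-\gamma}\mathrm{TV}(\mathbb{P}(\cdot|s_i,a),\mathbb{P}'(\cdot|s_i,a))\}$. *)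

theory Defs
  imports Complex_Main
begin

text \<open>States: finite type 's; actions: finite type 'a. Transition kernels are
  functions P s a t = probability of moving to t from s under action a.\<close>

definition is_dist :: "('s::finite \<Rightarrow> real) \<Rightarrow> bool" where
  "is_dist p \<longleftrightarrow> (\<forall>s. p s \<ge> 0) \<and> (\<Sum>s\<in>UNIV. p s) = 1"

definition policy_value ::
  "('s::finite \<Rightarrow> 'a::finite \<Rightarrow> 's \<Rightarrow> real) \<Rightarrow> ('s \<Rightarrow> 'a \<Rightarrow> real) \<Rightarrow> real \<Rightarrow> ('s \<Rightarrow> 'a) \<Rightarrow> 's \<Rightarrow> real" where
  "policy_value P R \<gamma> \<pi> =
     (THE V. \<forall>s. V s = R s (\<pi> s) + \<gamma> * (\<Sum>t\<in>UNIV. P s (\<pi> s) t * V t))"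

definition optimal_value ::
  "('s::finite \<Rightarrow> 'a::finite \<Rightarrow> 's \<Rightarrow> real) \<Rightarrow> ('s \<Rightarrow> 'a \<Rightarrow> real) \<Rightarrow> real \<Rightarrow> 's \<Rightarrow> real" where
  "optimal_value P R \<gamma> =
     (THE V. \<forall>s. V s = Max ((\<lambda>a. R s a + \<gamma> * (\<Sum>t\<in>UNIV. P s a t * V t)) ` UNIV))"

definition value_gap ::
  "('s::finite \<Rightarrow> 'a::finite \<Rightarrow> 's \<Rightarrow> real) \<Rightarrow> ('s \<Rightarrow> 'a \<Rightarrow> real) \<Rightarrow> real \<Rightarrow> ('s \<Rightarrow> 'a) \<Rightarrow> real" where
  "value_gap P R \<gamma> \<pi> =
     Max ((\<lambda>s. optimal_value P R \<gamma> s - policy_value P R \<gamma> \<pi> s) ` UNIV)"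

definition R_max :: "('s::finite \<Rightarrow> 'a::finite \<Rightarrow> real) \<Rightarrow> ('s \<Rightarrow> 'a \<Rightarrow> real) \<Rightarrow> real" where
  "R_max R R' = Max ((\<lambda>(i, j, a). \<bar>R i a - R' j a\<bar>) ` UNIV)"

text \<open>Wasserstein-1 with cost d (first argument: real state, second: DT state),
  minimum over couplings (written as infimum; the minimum is attained).\<close>
definition W1 :: "('s::finite \<Rightarrow> real) \<Rightarrow> ('s \<Rightarrow> real) \<Rightarrow> ('s \<Rightarrow> 's \<Rightarrow> real) \<Rightarrow> real" where
  "W1 p q d = Inf {(\<Sum>i\<in>UNIV. \<Sum>j\<in>UNIV. L i j * d i j) | L.
       (\<forall>i j. L i j \<ge> 0) \<and> (\<forall>i. (\<Sum>j\<in>UNIV. L i j) = p i) \<and> (\<forall>j. (\<Sum>i\<in>UNIV. L i j) = q j)}"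

primrec bisim_seq ::
  "('s::finite \<Rightarrow> 'a::finite \<Rightarrow> 's \<Rightarrow> real) \<Rightarrow> ('s \<Rightarrow> 'a \<Rightarrow> real) \<Rightarrow>
   ('s \<Rightarrow> 'a \<Rightarrow> 's \<Rightarrow> real) \<Rightarrow> ('s \<Rightarrow> 'a \<Rightarrow> real) \<Rightarrow> real \<Rightarrow> nat \<Rightarrow> 's \<Rightarrow> 's \<Rightarrow> real" where
  "bisim_seq P R P' R' \<gamma> 0 = (\<lambda>s s'. 0)"
| "bisim_seq P R P' R' \<gamma> (Suc n) = (\<lambda>s s'.
     Max ((\<lambda>a. \<bar>R s a - R' s' a\<bar> + \<gamma> * W1 (P s a) (P' s' a) (bisim_seq P R P' R' \<gamma> n)) ` UNIV))"

text \<open>DT bisimulation metric: supremum (= limit) of the nondecreasing sequence d_n.\<close>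
definition bisim_metric ::
  "('s::finite \<Rightarrow> 'a::finite \<Rightarrow> 's \<Rightarrow> real) \<Rightarrow> ('s \<Rightarrow> 'a \<Rightarrow> real) \<Rightarrow>
   ('s \<Rightarrow> 'a \<Rightarrow> 's \<Rightarrow> real) \<Rightarrow> ('s \<Rightarrow> 'a \<Rightarrow> real) \<Rightarrow> real \<Rightarrow> 's \<Rightarrow> 's \<Rightarrow> real" where
  "bisim_metric P R P' R' \<gamma> s s' = (SUP n. bisim_seq P R P' R' \<gamma> n s s')"

definition TV :: "('s::finite \<Rightarrow> real) \<Rightarrow> ('s \<Rightarrow> real) \<Rightarrow> real" where
  "TV p q = (1/2) * (\<Sum>s\<in>UNIV. \<bar>p s - q s\<bar>)"

definition d_TV ::
  "('s::finite \<Rightarrow> 'a::finite \<Rightarrow> 's \<Rightarrow> real) \<Rightarrow> ('s \<Rightarrow> 'a \<Rightarrow> real) \<Rightarrow>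
   ('s \<Rightarrow> 'a \<Rightarrow> 's \<Rightarrow> real) \<Rightarrow> ('s \<Rightarrow> 'a \<Rightarrow> real) \<Rightarrow> real \<Rightarrow> 's \<Rightarrow> real" where
  "d_TV P R P' R' \<gamma> s = Max ((\<lambda>a. \<bar>R s a - R' s a\<bar>
       + \<gamma> * R_max R R' / (1 - \<gamma>) * TV (P s a) (P' s a)) ` UNIV)"

end

(*
  Both MDPs have Bellman operators that are gamma-contractions for the sup norm, so their
  value functions exist and satisfy the Bellman equations.  Comparing the two optimality
  equations along a coupling of P(.|s,a) and P'(.|s',a) shows by induction on n that
  |V*_real(s) - V*_DT(s')| <= d_n(s,s') + gamma^n M, hence that the one-step discrepancy
  |R - R'| + gamma |E V*_real - E' V*_DT| is bounded by dbar(s,s').  Splitting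
  V*_real - V^pi_real = (V*_real - V*_DT) + (V*_DT - V^pi_DT) + (V^pi_DT - V^pi_real)
  and bounding the last term by dbar(s,s) + gamma ||V*_real - V^pi_real|| gives
  (1 - gamma) ||V*_real - V^pi_real|| <= 2 max dbar + ||V*_DT - V^pi_DT||, which is stronger
  than the first inequality because ||V*_DT - V^pi_DT|| >= 0.
  For the second inequality, a maximal coupling of P(.|s,a) and P'(.|s,a) puts mass at least
  1 - TV on the diagonal, where d_n is at most max_i d_n(s_i,s_i), and elsewhere d_n is at most
  R_max/(1 - gamma); thus max_i d_n(s_i,s_i) <= max d_TV + gamma max_i d_(n-1)(s_i,s_i).
*)

theory Submission
  imports Defs "HOL-Analysis.Analysis"
begin

abbreviation expect :: "('s::finite \<Rightarrow> real) \<Rightarrow> ('s \<Rightarrow> real) \<Rightarrow> real" where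
  "expect p V \<equiv> \<Sum>t\<in>UNIV. p t * V t"

lemma Max_range_diff_abs_le:
  fixes f g :: "'a::finite \<Rightarrow> real"
  shows "\<bar>(MAX a. f a) - (MAX a. g a)\<bar> \<le> (MAX a. \<bar>f a - g a\<bar>)"
proof -
  let ?m = "MAX a. \<bar>f a - g a\<bar>"
  have "f a \<le> (MAX a. g a) + ?m" "g a \<le> (MAX a. f a) + ?m" for a
  proof -
    have "\<bar>f a - g a\<bar> \<le> ?m" "f a \<le> (MAX a. f a)" "g a \<le> (MAX a. g a)"
      by (rule Max_ge; simp)+
    then show "f a \<le> (MAX a. g a) + ?m" "g a \<le> (MAX a. f a) + ?m"
      unfolding abs_le_iff by linarith+
  qed
  then have "(MAX a. f a) \<le> (MAX a. g a) + ?m" "(MAX a. g a) \<le> (MAX a. f a) + ?m"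
    by (simp_all add: Max_le_iff)
  then show ?thesis
    by linarith
qed

lemma expect_le_add_const:
  assumes "is_dist p" and "\<And>t. V t \<le> W t + c"
  shows "expect p V \<le> expect p W + c"
proof -
  have "expect p V \<le> expect p (\<lambda>t. W t + c)"
    using assms by (auto simp: is_dist_def intro!: sum_mono mult_left_mono)
  also have "\<dots> = expect p W + c"
    using assms by (simp add: is_dist_def distrib_left sum.distrib flip: sum_distrib_right)
  finally show ?thesis .
qed

lemma abs_expect_diff_le_Max:
  assumes "is_dist p"
  shows "\<bar>expect p V - expect p W\<bar> \<le> (MAX t. \<bar>V t - W t\<bar>)"
proof -
  have "\<bar>V t - W t\<bar> \<le> (MAX t. \<bar>V t - W t\<bar>)" for t
    by (rule Max_ge) auto
  then have "V t \<le> W t + (MAX t. \<bar>V t - W t\<bar>)" "W t \<le> V t + (MAX t. \<bar>V t - W t\<bar>)" for t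
    unfolding abs_le_iff by (simp_all add: algebra_simps)
  then have "expect p V \<le> expect p W + (MAX t. \<bar>V t - W t\<bar>)"
    and "expect p W \<le> expect p V + (MAX t. \<bar>V t - W t\<bar>)"
    using assms by (auto intro!: expect_le_add_const)
  then show ?thesis
    by linarith
qed

lemma abs_discounted_diff_le:
  fixes r r' x y \<gamma> :: real
  assumes "0 \<le> \<gamma>"
  shows "\<bar>(r + \<gamma> * x) - (r' + \<gamma> * y)\<bar> \<le> \<bar>r - r'\<bar> + \<gamma> * \<bar>x - y\<bar>"
proof -
  have "\<bar>(r + \<gamma> * x) - (r' + \<gamma> * y)\<bar> = \<bar>(r - r') + \<gamma> * (x - y)\<bar>"
    by (simp add: algebra_simps)
  also have "\<dots> \<le> \<bar>r - r'\<bar> + \<gamma> * \<bar>x - y\<bar>"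
    using abs_triangle_ineq[of "r - r'" "\<gamma> * (x - y)"] assms by (simp add: abs_mult)
  finally show ?thesis .
qed

lemma abs_discounted_expect_diff_le:
  assumes "is_dist p" and "0 \<le> \<gamma>"
  shows "\<bar>(r + \<gamma> * expect p V) - (r + \<gamma> * expect p W)\<bar> \<le> \<gamma> * (MAX t. \<bar>V t - W t\<bar>)"
  using mult_left_mono[OF abs_expect_diff_le_Max[OF assms(1)] assms(2)] assms(2)
  by (simp add: abs_mult flip: right_diff_distrib)

lemma le_of_le_add_power:
  fixes x y c q :: real
  assumes "0 \<le> q" and "q < 1" and "\<And>n. x \<le> y + c * q ^ n"
  shows "x \<le> y"
proof -
  have "(\<lambda>n. y + c * q ^ n) \<longlonglongrightarrow> y + c * 0"
    using assms(1,2) by (intro tendsto_intros LIMSEQ_power_zero) auto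
  then show ?thesis
    using assms(3) by (intro LIMSEQ_le_const) auto
qed

lemma finite_contraction_unique_fixpoint:
  fixes F :: "('s::finite \<Rightarrow> real) \<Rightarrow> 's \<Rightarrow> real"
  assumes "\<gamma> < 1" and contraction: "\<And>V W s. \<bar>F V s - F W s\<bar> \<le> \<gamma> * (MAX t. \<bar>V t - W t\<bar>)"
  shows "\<exists>!V. \<forall>s. V s = F V s"
proof -
  \<comment> \<open>Banach's theorem in the space of bounded functions with the sup metric, which on a
    finite type contains every function.\<close>
  interpret Fun: Metric_space "Met_TC.fspace (UNIV :: 's set)" "Met_TC.fdist UNIV"
    by (rule Met_TC.Metric_space_funspace)
  have fspace: "Met_TC.fspace UNIV = (UNIV :: ('s \<Rightarrow> real) set)"
    by (auto simp: Met_TC.fspace_def finite_imp_bounded)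
  have fdist: "Met_TC.fdist UNIV V W = (MAX t. \<bar>V t - W t\<bar>)" for V W :: "'s \<Rightarrow> real"
    by (simp add: Met_TC.fdist_def fspace cSup_eq_Max dist_real_def)
  have lipschitz: "Met_TC.fdist UNIV (F V) (F W) \<le> \<gamma> * Met_TC.fdist UNIV V W" for V W
    unfolding fdist using contraction by (simp add: Max_le_iff)
  have "mcomplete_of (funspace (UNIV :: 's set) (Met_TC.Self :: real metric))"
    by (rule Met_TC.mcomplete_funspace) (simp add: complete_UNIV)
  then obtain V where V: "F V = V"
    using Fun.Banach_fixedpoint_thm[of F \<gamma>] assms(1) lipschitz by (auto simp: mcomplete_of_def fspace)
  moreover have "W = V" if "F W = W" for W
    using Fun.contraction_imp_unique_fixpoint[of F W V \<gamma>] that V assms(1) lipschitz by (simp add: fspace)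
  ultimately show ?thesis
    by (metis ext)
qed

definition is_coupling ::
    "('s::finite \<Rightarrow> real) \<Rightarrow> ('s \<Rightarrow> real) \<Rightarrow> ('s \<Rightarrow> 's \<Rightarrow> real) \<Rightarrow> bool" where
  "is_coupling p q L \<longleftrightarrow>
     (\<forall>i j. 0 \<le> L i j) \<and> (\<forall>i. (\<Sum>j\<in>UNIV. L i j) = p i) \<and> (\<forall>j. (\<Sum>i\<in>UNIV. L i j) = q j)"

abbreviation transport_cost ::
    "('s::finite \<Rightarrow> 's \<Rightarrow> real) \<Rightarrow> ('s \<Rightarrow> 's \<Rightarrow> real) \<Rightarrow> real" where
  "transport_cost L d \<equiv> \<Sum>i\<in>UNIV. \<Sum>j\<in>UNIV. L i j * d i j"

lemma W1_eq_INF: "W1 p q d = (INF L\<in>Collect (is_coupling p q). transport_cost L d)"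
  unfolding W1_def is_coupling_def by (rule arg_cong[where f=Inf]) auto

lemma is_coupling_product:
  assumes "is_dist p" and "is_dist q"
  shows "is_coupling p q (\<lambda>i j. p i * q j)"
  using assms unfolding is_coupling_def is_dist_def
  by (auto simp flip: sum_distrib_left sum_distrib_right)

lemma coupling_total_mass:
  assumes "is_coupling p q L" and "is_dist p"
  shows "(\<Sum>i\<in>UNIV. \<Sum>j\<in>UNIV. L i j) = 1"
  using assms unfolding is_coupling_def is_dist_def by simp

lemma W1_le_transport_cost:
  assumes "is_coupling p q L" and "\<And>i j. 0 \<le> d i j"
  shows "W1 p q d \<le> transport_cost L d"
  unfolding W1_eq_INF
proof (rule cINF_lower)
  show "bdd_below ((\<lambda>L. transport_cost L d) ` Collect (is_coupling p q))"
    using assms(2) by (intro bdd_belowI[where m=0]) (auto simp: is_coupling_def intro!: sum_nonneg)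
qed (use assms(1) in simp)

lemma W1_greatest:
  assumes "is_dist p" and "is_dist q" and "\<And>L. is_coupling p q L \<Longrightarrow> x \<le> transport_cost L d"
  shows "x \<le> W1 p q d"
  unfolding W1_eq_INF
  using is_coupling_product[OF assms(1,2)] assms(3) by (intro cINF_greatest) auto

lemma W1_nonneg:
  assumes "is_dist p" and "is_dist q" and "\<And>i j. 0 \<le> d i j"
  shows "0 \<le> W1 p q d"
  using assms by (intro W1_greatest) (auto simp: is_coupling_def intro!: sum_nonneg)

lemma transport_cost_le:
  assumes "is_coupling p q L" and "is_dist p" and "\<And>i j. d i j \<le> K"
  shows "transport_cost L d \<le> K"
proof -
  have "transport_cost L d \<le> (\<Sum>i\<in>UNIV. \<Sum>j\<in>UNIV. L i j * K)"
    using assms by (intro sum_mono mult_left_mono) (auto simp: is_coupling_def)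
  also have "\<dots> = K"
    using coupling_total_mass[OF assms(1,2)] by (simp flip: sum_distrib_right)
  finally show ?thesis .
qed

lemma W1_le_bound:
  assumes "is_dist p" and "is_dist q" and "\<And>i j. 0 \<le> d i j" and "\<And>i j. d i j \<le> K"
  shows "W1 p q d \<le> K"
  using is_coupling_product[OF assms(1,2)] assms
  by (blast intro: order_trans[OF W1_le_transport_cost transport_cost_le])

lemma expect_diff_eq_transport_cost:
  assumes "is_coupling p q L"
  shows "expect p f - expect q g = transport_cost L (\<lambda>i j. f i - g j)"
proof -
  have "expect p f = (\<Sum>i\<in>UNIV. \<Sum>j\<in>UNIV. L i j * f i)"
    using assms by (simp add: is_coupling_def flip: sum_distrib_right)
  moreover have "expect q g = (\<Sum>i\<in>UNIV. \<Sum>j\<in>UNIV. L i j * g j)"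
    using assms by (simp add: is_coupling_def sum.swap[of _ UNIV UNIV] flip: sum_distrib_right)
  ultimately show ?thesis
    by (simp add: sum_subtractf right_diff_distrib)
qed

lemma abs_expect_diff_le_W1:
  assumes p: "is_dist p" and q: "is_dist q" and fg: "\<And>i j. \<bar>f i - g j\<bar> \<le> d i j + e"
  shows "\<bar>expect p f - expect q g\<bar> \<le> W1 p q d + e"
proof -
  have "\<bar>expect p f - expect q g\<bar> - e \<le> transport_cost L d" if L: "is_coupling p q L" for L
  proof -
    have "\<bar>expect p f - expect q g\<bar> \<le> (\<Sum>i\<in>UNIV. \<Sum>j\<in>UNIV. \<bar>L i j * (f i - g j)\<bar>)"
      unfolding expect_diff_eq_transport_cost[OF L]
      by (rule order_trans[OF sum_abs sum_mono[OF sum_abs]])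
    also have "\<dots> \<le> (\<Sum>i\<in>UNIV. \<Sum>j\<in>UNIV. L i j * d i j + L i j * e)"
      using L fg by (intro sum_mono) (auto simp: is_coupling_def abs_mult intro!: mult_left_mono simp flip: distrib_left)
    also have "\<dots> = transport_cost L d + e"
      using coupling_total_mass[OF L p] by (simp add: sum.distrib flip: sum_distrib_right)
    finally show ?thesis
      by simp
  qed
  then show ?thesis
    using W1_greatest[OF p q] by fastforce
qed

lemma maximal_coupling_exists:
  assumes p: "is_dist p" and q: "is_dist q"
  obtains L where "is_coupling p q L" and "1 - TV p q \<le> (\<Sum>i\<in>UNIV. L i i)"
proof -
  define m where "m i = min (p i) (q i)" for i
  define a where "a i = p i - m i" for i
  define b where "b j = q j - m j" for j
  define T where "T = TV p q"
  \<comment> \<open>If \<open>T = 0\<close> then \<open>a = b = 0\<close>, so the junk value of \<open>x / 0\<close> does no harm.\<close>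
  define L where "L i j = (if i = j then m i else 0) + a i * b j / T" for i j
  have a_nonneg: "0 \<le> a i" and b_nonneg: "0 \<le> b i" and m_nonneg: "0 \<le> m i" for i
    using p q by (auto simp: a_def b_def m_def is_dist_def)
  have "sum a UNIV - sum b UNIV = sum p UNIV - sum q UNIV"
    by (simp add: a_def b_def sum_subtractf)
  moreover have "\<bar>p i - q i\<bar> = a i + b i" for i
    by (auto simp: a_def b_def m_def)
  ultimately have sum_a: "sum a UNIV = T" and sum_b: "sum b UNIV = T"
    using p q by (auto simp: T_def TV_def is_dist_def sum.distrib)
  have T_zero: "a i = 0" "b i = 0" if "T = 0" for i
    using sum_a sum_b that a_nonneg b_nonneg by (simp_all add: sum_nonneg_eq_0_iff)
  have "(\<Sum>j\<in>UNIV. L i j) = m i + a i * sum b UNIV / T" for i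
    by (simp add: L_def sum.distrib sum_distrib_left flip: sum_divide_distrib)
  then have rows: "(\<Sum>j\<in>UNIV. L i j) = p i" for i
    unfolding sum_b using T_zero by (cases "T = 0") (auto simp: a_def)
  have "(\<Sum>i\<in>UNIV. L i j) = m j + sum a UNIV * b j / T" for j
    by (simp add: L_def sum.distrib sum_distrib_right flip: sum_divide_distrib)
  then have cols: "(\<Sum>i\<in>UNIV. L i j) = q j" for j
    unfolding sum_a using T_zero by (cases "T = 0") (auto simp: b_def)
  have "0 \<le> T"
    unfolding sum_a[symmetric] using a_nonneg by (simp add: sum_nonneg)
  then have "0 \<le> L i j" for i j
    using m_nonneg a_nonneg b_nonneg by (simp add: L_def)
  with rows cols have "is_coupling p q L"
    by (simp add: is_coupling_def)
  moreover have "1 - T \<le> (\<Sum>i\<in>UNIV. L i i)"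
  proof -
    have "1 - T = sum m UNIV"
      using p sum_a by (simp add: is_dist_def a_def sum_subtractf)
    also have "\<dots> \<le> (\<Sum>i\<in>UNIV. L i i)"
      using \<open>0 \<le> T\<close> a_nonneg b_nonneg by (intro sum_mono) (simp add: L_def)
    finally show ?thesis .
  qed
  ultimately show ?thesis
    using that T_def by blast
qed

lemma transport_cost_le_diagonal_TV:
  assumes L: "is_coupling p q L" and p: "is_dist p" and diag: "1 - TV p q \<le> (\<Sum>i\<in>UNIV. L i i)"
    and d_nonneg: "\<And>i j. 0 \<le> d i j" and "\<And>i. d i i \<le> \<Delta>" and "\<And>i j. d i j \<le> K"
  shows "transport_cost L d \<le> \<Delta> + TV p q * K"
proof -
  let ?D = "\<Sum>i\<in>UNIV. L i i"
  have L_nonneg: "0 \<le> L i j" for i j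
    using L by (simp add: is_coupling_def)
  have "transport_cost L d \<le> (\<Sum>i\<in>UNIV. \<Sum>j\<in>UNIV. L i j * (if i = j then \<Delta> else K))"
    using assms L_nonneg by (intro sum_mono mult_left_mono) auto
  also have "\<dots> = (\<Sum>i\<in>UNIV. \<Sum>j\<in>UNIV. L i j * K + (if i = j then L i j * (\<Delta> - K) else 0))"
    by (intro sum.cong) (auto simp: algebra_simps)
  also have "\<dots> = K + (\<Delta> - K) * ?D"
    using coupling_total_mass[OF L p]
    by (simp add: sum.distrib mult.commute[of "\<Delta> - K"] flip: sum_distrib_right)
  also have "\<dots> = \<Delta> * ?D + K * (1 - ?D)"
    by (simp add: algebra_simps)
  also have "\<dots> \<le> \<Delta> + K * TV p q"
  proof (rule add_mono)
    have "?D \<le> (\<Sum>i\<in>UNIV. \<Sum>j\<in>UNIV. L i j)"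
      using L_nonneg by (intro sum_mono member_le_sum) auto
    then show "\<Delta> * ?D \<le> \<Delta>"
      using coupling_total_mass[OF L p] d_nonneg assms(5)[of undefined]
      by (metis mult_left_le order_trans)
    show "K * (1 - ?D) \<le> K * TV p q"
      using diag d_nonneg assms(6)[of undefined undefined] by (intro mult_left_mono) (auto intro: order_trans)
  qed
  finally show ?thesis
    by (simp add: mult.commute)
qed

lemma W1_le_diagonal_TV:
  assumes "is_dist p" and "is_dist q"
    and "\<And>i j. 0 \<le> d i j" and "\<And>i. d i i \<le> \<Delta>" and "\<And>i j. d i j \<le> K"
  shows "W1 p q d \<le> \<Delta> + TV p q * K"
proof -
  obtain L where "is_coupling p q L" and "1 - TV p q \<le> (\<Sum>i\<in>UNIV. L i i)"
    using maximal_coupling_exists[OF assms(1,2)] .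
  then show ?thesis
    using assms by (blast intro: order_trans[OF W1_le_transport_cost transport_cost_le_diagonal_TV])
qed

lemma value_gap_ge: "optimal_value P R \<gamma> s - policy_value P R \<gamma> \<pi> s \<le> value_gap P R \<gamma> \<pi>"
  unfolding value_gap_def by (rule Max_ge) auto

lemma value_gap_le_iff:
  "value_gap P R \<gamma> \<pi> \<le> x \<longleftrightarrow> (\<forall>s. optimal_value P R \<gamma> s - policy_value P R \<gamma> \<pi> s \<le> x)"
  by (simp add: value_gap_def Max_le_iff)

locale discounted_mdp =
  fixes P :: "'s::finite \<Rightarrow> 'a::finite \<Rightarrow> 's \<Rightarrow> real"
    and R :: "'s \<Rightarrow> 'a \<Rightarrow> real"
    and \<gamma> :: real
  assumes is_dist_P: "is_dist (P s a)"
    and discount_nonneg: "0 \<le> \<gamma>"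
    and discount_less_1: "\<gamma> < 1"
begin

lemma policy_value_eq:
  "policy_value P R \<gamma> \<pi> s = R s (\<pi> s) + \<gamma> * expect (P s (\<pi> s)) (policy_value P R \<gamma> \<pi>)"
proof -
  let ?F = "\<lambda>V s. R s (\<pi> s) + \<gamma> * expect (P s (\<pi> s)) V"
  have "\<exists>!V. \<forall>s. V s = ?F V s"
    using discount_less_1
    by (rule finite_contraction_unique_fixpoint)
      (rule abs_discounted_expect_diff_le[OF is_dist_P discount_nonneg])
  from theI'[OF this] show ?thesis
    unfolding policy_value_def by blast
qed

lemma optimal_value_eq:
  "optimal_value P R \<gamma> s = (MAX a. R s a + \<gamma> * expect (P s a) (optimal_value P R \<gamma>))"
proof -
  let ?F = "\<lambda>V s. MAX a. R s a + \<gamma> * expect (P s a) V"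
  have "\<exists>!V. \<forall>s. V s = ?F V s"
    using discount_less_1
  proof (rule finite_contraction_unique_fixpoint)
    fix V W s
    have "\<bar>?F V s - ?F W s\<bar>
        \<le> (MAX a. \<bar>(R s a + \<gamma> * expect (P s a) V) - (R s a + \<gamma> * expect (P s a) W)\<bar>)"
      by (rule Max_range_diff_abs_le)
    also have "\<dots> \<le> \<gamma> * (MAX t. \<bar>V t - W t\<bar>)"
      using abs_discounted_expect_diff_le[OF is_dist_P discount_nonneg] by (simp add: Max_le_iff)
    finally show "\<bar>?F V s - ?F W s\<bar> \<le> \<gamma> * (MAX t. \<bar>V t - W t\<bar>)" .
  qed
  from theI'[OF this] show ?thesis
    unfolding optimal_value_def by blast
qed

lemma policy_value_le_optimal_value: "policy_value P R \<gamma> \<pi> s \<le> optimal_value P R \<gamma> s"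
proof -
  let ?V = "policy_value P R \<gamma> \<pi>" and ?V' = "optimal_value P R \<gamma>"
  let ?m = "MAX t. ?V t - ?V' t"
  have le_m: "?V t - ?V' t \<le> ?m" for t
    by (rule Max_ge) auto
  have "?V t - ?V' t \<le> \<gamma> * ?m" for t
  proof -
    have "R t (\<pi> t) + \<gamma> * expect (P t (\<pi> t)) ?V' \<le> ?V' t"
      unfolding optimal_value_eq[of t] by (rule Max_ge) auto
    moreover have "expect (P t (\<pi> t)) ?V \<le> expect (P t (\<pi> t)) ?V' + ?m"
      using le_m by (intro expect_le_add_const[OF is_dist_P]) (simp add: algebra_simps)
    from mult_left_mono[OF this discount_nonneg]
    have "\<gamma> * expect (P t (\<pi> t)) ?V \<le> \<gamma> * expect (P t (\<pi> t)) ?V' + \<gamma> * ?m"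
      by (simp only: distrib_left)
    ultimately show ?thesis
      using policy_value_eq[of \<pi> t] by linarith
  qed
  then have "?m \<le> \<gamma> * ?m"
    by (simp add: Max_le_iff)
  then have "(1 - \<gamma>) * ?m \<le> 0"
    by (simp add: algebra_simps)
  then have "?m \<le> 0"
    using discount_less_1 by (simp add: mult_le_0_iff)
  then show ?thesis
    using le_m[of s] by linarith
qed

lemma value_gap_nonneg: "0 \<le> value_gap P R \<gamma> \<pi>"
  using value_gap_ge[of P R \<gamma> undefined \<pi>] policy_value_le_optimal_value[of \<pi> undefined] by linarith

end

lemma R_max_ge: "\<bar>R s a - R' s' a\<bar> \<le> R_max R R'"
  unfolding R_max_def by (rule Max_ge) (auto intro: image_eqI[where x="(s, s', a)"])

lemma R_max_nonneg: "0 \<le> R_max R R'"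
  using R_max_ge[of R undefined undefined R'] by (rule order_trans[OF abs_ge_zero])

lemma bisim_seq_Suc_ge:
  "\<bar>R s a - R' s' a\<bar> + \<gamma> * W1 (P s a) (P' s' a) (bisim_seq P R P' R' \<gamma> n)
     \<le> bisim_seq P R P' R' \<gamma> (Suc n) s s'"
  by (auto intro: Max_ge)

lemma d_TV_ge:
  "\<bar>R s a - R' s a\<bar> + \<gamma> * R_max R R' / (1 - \<gamma>) * TV (P s a) (P' s a) \<le> d_TV P R P' R' \<gamma> s"
  unfolding d_TV_def by (rule Max_ge) auto

lemma d_TV_nonneg:
  assumes "0 \<le> \<gamma>" and "\<gamma> < 1"
  shows "0 \<le> d_TV P R P' R' \<gamma> s"
proof -
  have "0 \<le> \<bar>R s a - R' s a\<bar> + \<gamma> * R_max R R' / (1 - \<gamma>) * TV (P s a) (P' s a)" for a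
    using assms R_max_nonneg[of R R'] by (auto simp: TV_def intro!: sum_nonneg)
  then show ?thesis
    using d_TV_ge order_trans by blast
qed

locale mdp_pair = real: discounted_mdp P R \<gamma> + dt: discounted_mdp P' R' \<gamma>
  for P :: "'s::finite \<Rightarrow> 'a::finite \<Rightarrow> 's \<Rightarrow> real" and R :: "'s \<Rightarrow> 'a \<Rightarrow> real"
    and P' :: "'s \<Rightarrow> 'a \<Rightarrow> 's \<Rightarrow> real" and R' :: "'s \<Rightarrow> 'a \<Rightarrow> real" and \<gamma> :: real
begin

abbreviation q_discrepancy :: "'s \<Rightarrow> 's \<Rightarrow> 'a \<Rightarrow> real" where
  "q_discrepancy s s' a \<equiv> \<bar>R s a - R' s' a\<bar>
     + \<gamma> * \<bar>expect (P s a) (optimal_value P R \<gamma>) - expect (P' s' a) (optimal_value P' R' \<gamma>)\<bar>"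

lemma bisim_seq_nonneg: "0 \<le> bisim_seq P R P' R' \<gamma> n s s'"
proof (induction n arbitrary: s s')
  case (Suc n)
  have "0 \<le> W1 (P s a) (P' s' a) (bisim_seq P R P' R' \<gamma> n)" for a
    using Suc by (intro W1_nonneg real.is_dist_P dt.is_dist_P)
  then have "0 \<le> \<bar>R s a - R' s' a\<bar> + \<gamma> * W1 (P s a) (P' s' a) (bisim_seq P R P' R' \<gamma> n)" for a
    using real.discount_nonneg by simp
  then show ?case
    using bisim_seq_Suc_ge order_trans by blast
qed simp

lemma bisim_seq_le_R_max: "bisim_seq P R P' R' \<gamma> n s s' \<le> R_max R R' / (1 - \<gamma>)"
proof (induction n arbitrary: s s')
  case 0
  show ?case
    using R_max_nonneg[of R R'] real.discount_less_1 by simp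
next
  case (Suc n)
  let ?K = "R_max R R' / (1 - \<gamma>)"
  have "W1 (P s a) (P' s' a) (bisim_seq P R P' R' \<gamma> n) \<le> ?K" for a
    using Suc bisim_seq_nonneg by (intro W1_le_bound real.is_dist_P dt.is_dist_P)
  then have "\<bar>R s a - R' s' a\<bar> + \<gamma> * W1 (P s a) (P' s' a) (bisim_seq P R P' R' \<gamma> n)
      \<le> R_max R R' + \<gamma> * ?K" for a
    using R_max_ge real.discount_nonneg by (intro add_mono mult_left_mono)
  moreover have "R_max R R' + \<gamma> * ?K = ?K"
    using real.discount_less_1 by (simp add: field_simps)
  ultimately show ?case
    by (simp add: Max_le_iff)
qed

lemma bisim_seq_le_bisim_metric: "bisim_seq P R P' R' \<gamma> n s s' \<le> bisim_metric P R P' R' \<gamma> s s'"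
  unfolding bisim_metric_def
  by (rule cSUP_upper) (auto intro: bdd_aboveI2 bisim_seq_le_R_max)

lemma abs_optimal_value_diff_le_q_discrepancy:
  assumes "\<And>a. q_discrepancy s s' a \<le> x"
  shows "\<bar>optimal_value P R \<gamma> s - optimal_value P' R' \<gamma> s'\<bar> \<le> x"
proof -
  have "\<bar>optimal_value P R \<gamma> s - optimal_value P' R' \<gamma> s'\<bar>
      \<le> (MAX a. \<bar>(R s a + \<gamma> * expect (P s a) (optimal_value P R \<gamma>))
                 - (R' s' a + \<gamma> * expect (P' s' a) (optimal_value P' R' \<gamma>))\<bar>)"
    unfolding real.optimal_value_eq[of s] dt.optimal_value_eq[of s'] by (rule Max_range_diff_abs_le)
  also have "\<dots> \<le> x"
    using order_trans[OF abs_discounted_diff_le[OF real.discount_nonneg] assms]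
    by (simp add: Max_le_iff)
  finally show ?thesis .
qed

lemma q_discrepancy_le_bisim_seq_Suc:
  assumes "\<And>t t'. \<bar>optimal_value P R \<gamma> t - optimal_value P' R' \<gamma> t'\<bar>
      \<le> bisim_seq P R P' R' \<gamma> n t t' + c"
  shows "q_discrepancy s s' a \<le> bisim_seq P R P' R' \<gamma> (Suc n) s s' + \<gamma> * c"
proof -
  have "\<bar>expect (P s a) (optimal_value P R \<gamma>) - expect (P' s' a) (optimal_value P' R' \<gamma>)\<bar>
      \<le> W1 (P s a) (P' s' a) (bisim_seq P R P' R' \<gamma> n) + c"
    using assms by (intro abs_expect_diff_le_W1 real.is_dist_P dt.is_dist_P)
  from mult_left_mono[OF this real.discount_nonneg]
  have "\<gamma> * \<bar>expect (P s a) (optimal_value P R \<gamma>) - expect (P' s' a) (optimal_value P' R' \<gamma>)\<bar>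
      \<le> \<gamma> * W1 (P s a) (P' s' a) (bisim_seq P R P' R' \<gamma> n) + \<gamma> * c"
    by (simp only: distrib_left)
  then show ?thesis
    using bisim_seq_Suc_ge[of R s a R' s' \<gamma> P P' n] by linarith
qed

lemma abs_optimal_value_diff_le_bisim_seq:
  assumes "\<And>t t'. \<bar>optimal_value P R \<gamma> t - optimal_value P' R' \<gamma> t'\<bar> \<le> M"
  shows "\<bar>optimal_value P R \<gamma> s - optimal_value P' R' \<gamma> s'\<bar>
      \<le> bisim_seq P R P' R' \<gamma> n s s' + \<gamma> ^ n * M"
proof (induction n arbitrary: s s')
  case 0
  show ?case
    using assms by simp
next
  case (Suc n)
  show ?case
    unfolding power_Suc mult.assoc
    by (rule abs_optimal_value_diff_le_q_discrepancy q_discrepancy_le_bisim_seq_Suc Suc.IH)+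
qed

text \<open>Only the iterates \<open>d\<^sub>n\<close> satisfy a usable recursion (\<open>bisim_metric\<close> is defined as their
  supremum), so we bound by \<open>d\<^sub>n\<^sub>+\<^sub>1 + \<gamma>\<^sup>n\<^sup>+\<^sup>1 M\<close> and let \<open>n \<rightarrow> \<infinity>\<close>.\<close>

lemma q_discrepancy_le_bisim_metric:
  "q_discrepancy s s' a \<le> bisim_metric P R P' R' \<gamma> s s'"
proof -
  obtain M where M: "\<And>t t'. \<bar>optimal_value P R \<gamma> t - optimal_value P' R' \<gamma> t'\<bar> \<le> M"
  proof
    fix t t'
    have "\<bar>optimal_value P R \<gamma> t\<bar> \<le> (MAX t. \<bar>optimal_value P R \<gamma> t\<bar>)"
      and "\<bar>optimal_value P' R' \<gamma> t'\<bar> \<le> (MAX t'. \<bar>optimal_value P' R' \<gamma> t'\<bar>)"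
      by (rule Max_ge; simp)+
    then show "\<bar>optimal_value P R \<gamma> t - optimal_value P' R' \<gamma> t'\<bar>
        \<le> (MAX t. \<bar>optimal_value P R \<gamma> t\<bar>) + (MAX t'. \<bar>optimal_value P' R' \<gamma> t'\<bar>)"
      by (meson abs_triangle_ineq4 add_mono order_trans)
  qed
  show ?thesis
  proof (rule le_of_le_add_power[OF real.discount_nonneg real.discount_less_1])
    fix n
    have "q_discrepancy s s' a \<le> bisim_seq P R P' R' \<gamma> (Suc n) s s' + \<gamma> * (\<gamma> ^ n * M)"
      by (rule q_discrepancy_le_bisim_seq_Suc[OF abs_optimal_value_diff_le_bisim_seq[OF M]])
    also have "\<dots> \<le> bisim_metric P R P' R' \<gamma> s s' + (\<gamma> * M) * \<gamma> ^ n"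
      using bisim_seq_le_bisim_metric[of "Suc n" s s'] by (simp add: mult_ac del: bisim_seq.simps)
    finally show "q_discrepancy s s' a \<le> bisim_metric P R P' R' \<gamma> s s' + (\<gamma> * M) * \<gamma> ^ n" .
  qed
qed

lemma abs_optimal_value_diff_le_bisim_metric:
  "\<bar>optimal_value P R \<gamma> s - optimal_value P' R' \<gamma> s'\<bar> \<le> bisim_metric P R P' R' \<gamma> s s'"
  by (intro abs_optimal_value_diff_le_q_discrepancy q_discrepancy_le_bisim_metric)

lemma policy_value_diff_le_bisim_metric:
  "policy_value P' R' \<gamma> \<pi> s - policy_value P R \<gamma> \<pi> s
     \<le> bisim_metric P R P' R' \<gamma> s s + \<gamma> * value_gap P R \<gamma> \<pi>"
proof -
  let ?a = "\<pi> s"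
  let ?V = "optimal_value P R \<gamma>" and ?V\<pi> = "policy_value P R \<gamma> \<pi>"
  let ?W = "optimal_value P' R' \<gamma>" and ?W\<pi> = "policy_value P' R' \<gamma> \<pi>"
  let ?G = "value_gap P R \<gamma> \<pi>"
  have "expect (P' s ?a) ?W\<pi> \<le> expect (P' s ?a) ?W + 0"
    using dt.policy_value_le_optimal_value by (intro expect_le_add_const dt.is_dist_P) simp
  moreover have "expect (P s ?a) ?V \<le> expect (P s ?a) ?V\<pi> + ?G"
    using value_gap_ge by (intro expect_le_add_const real.is_dist_P) (simp add: algebra_simps)
  ultimately have "expect (P' s ?a) ?W\<pi> - expect (P s ?a) ?V\<pi>
      \<le> \<bar>expect (P s ?a) ?V - expect (P' s ?a) ?W\<bar> + ?G"
    using abs_ge_minus_self[of "expect (P s ?a) ?V - expect (P' s ?a) ?W"] by linarith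
  from mult_left_mono[OF this real.discount_nonneg]
  have "\<gamma> * expect (P' s ?a) ?W\<pi> - \<gamma> * expect (P s ?a) ?V\<pi>
      \<le> \<gamma> * \<bar>expect (P s ?a) ?V - expect (P' s ?a) ?W\<bar> + \<gamma> * ?G"
    by (simp only: right_diff_distrib distrib_left)
  then show ?thesis
    using real.policy_value_eq[of \<pi> s] dt.policy_value_eq[of \<pi> s]
      q_discrepancy_le_bisim_metric[of s ?a s] abs_ge_minus_self[of "R s ?a - R' s ?a"]
    by linarith
qed

lemma value_gap_le_bisim_metric:
  "(1 - \<gamma>) * value_gap P R \<gamma> \<pi>
     \<le> 2 * (MAX s. bisim_metric P R P' R' \<gamma> s s) + value_gap P' R' \<gamma> \<pi>"
proof -
  let ?\<delta> = "MAX s. bisim_metric P R P' R' \<gamma> s s"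
  have "optimal_value P R \<gamma> s - policy_value P R \<gamma> \<pi> s
      \<le> 2 * ?\<delta> + value_gap P' R' \<gamma> \<pi> + \<gamma> * value_gap P R \<gamma> \<pi>" for s
  proof -
    have "bisim_metric P R P' R' \<gamma> s s \<le> ?\<delta>"
      by (rule Max_ge) auto
    then show ?thesis
      using abs_le_D1[OF abs_optimal_value_diff_le_bisim_metric[of s s]]
        value_gap_ge[of P' R' \<gamma> s \<pi>] policy_value_diff_le_bisim_metric[of \<pi> s]
      by linarith
  qed
  then have "value_gap P R \<gamma> \<pi> \<le> 2 * ?\<delta> + value_gap P' R' \<gamma> \<pi> + \<gamma> * value_gap P R \<gamma> \<pi>"
    unfolding value_gap_le_iff by blast
  then show ?thesis
    by (simp add: algebra_simps)
qed

lemma bisim_seq_diagonal_le_d_TV: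
  "bisim_seq P R P' R' \<gamma> n s s \<le> (MAX s. d_TV P R P' R' \<gamma> s) / (1 - \<gamma>)"
proof (induction n arbitrary: s)
  case 0
  have "0 \<le> d_TV P R P' R' \<gamma> s"
    by (rule d_TV_nonneg[OF real.discount_nonneg real.discount_less_1])
  also have "\<dots> \<le> (MAX s. d_TV P R P' R' \<gamma> s)"
    by (rule Max_ge) auto
  finally show ?case
    using real.discount_less_1 by simp
next
  case (Suc n)
  let ?D = "MAX s. d_TV P R P' R' \<gamma> s"
  have "\<bar>R s a - R' s a\<bar> + \<gamma> * W1 (P s a) (P' s a) (bisim_seq P R P' R' \<gamma> n) \<le> ?D / (1 - \<gamma>)" for a
  proof -
    let ?TV = "TV (P s a) (P' s a)"
    have "W1 (P s a) (P' s a) (bisim_seq P R P' R' \<gamma> n) \<le> ?D / (1 - \<gamma>) + ?TV * (R_max R R' / (1 - \<gamma>))"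
      using Suc bisim_seq_nonneg bisim_seq_le_R_max
      by (intro W1_le_diagonal_TV real.is_dist_P dt.is_dist_P)
    from mult_left_mono[OF this real.discount_nonneg]
    have "\<gamma> * W1 (P s a) (P' s a) (bisim_seq P R P' R' \<gamma> n)
        \<le> \<gamma> * R_max R R' / (1 - \<gamma>) * ?TV + \<gamma> * (?D / (1 - \<gamma>))"
      by (simp add: distrib_left mult_ac)
    moreover have "\<bar>R s a - R' s a\<bar> + \<gamma> * R_max R R' / (1 - \<gamma>) * ?TV \<le> ?D"
      by (rule order_trans[OF d_TV_ge]) (rule Max_ge, auto)
    ultimately have "\<bar>R s a - R' s a\<bar> + \<gamma> * W1 (P s a) (P' s a) (bisim_seq P R P' R' \<gamma> n)
        \<le> ?D + \<gamma> * (?D / (1 - \<gamma>))"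
      by linarith
    also have "\<dots> = ?D / (1 - \<gamma>)"
      using real.discount_less_1 by (simp add: field_simps)
    finally show ?thesis .
  qed
  then show ?case
    by (simp add: Max_le_iff)
qed

lemma bisim_metric_diagonal_le_d_TV:
  "bisim_metric P R P' R' \<gamma> s s \<le> (MAX s. d_TV P R P' R' \<gamma> s) / (1 - \<gamma>)"
  unfolding bisim_metric_def by (rule cSUP_least) (auto intro: bisim_seq_diagonal_le_d_TV)

end

theorem theorem1:
  fixes P P' :: "'s::finite \<Rightarrow> 'a::finite \<Rightarrow> 's \<Rightarrow> real"
    and R R' :: "'s \<Rightarrow> 'a \<Rightarrow> real"
    and \<gamma> :: real
    and \<pi> :: "'s \<Rightarrow> 'a"
  assumes "0 < \<gamma>" and "\<gamma> < 1"
    and "\<forall>s a. is_dist (P s a)"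
    and "\<forall>s a. is_dist (P' s a)"
  shows "value_gap P R \<gamma> \<pi>
           \<le> 2 / (1 - \<gamma>) * Max ((\<lambda>s. bisim_metric P R P' R' \<gamma> s s) ` UNIV)
             + (1 + \<gamma>) / (1 - \<gamma>) * value_gap P' R' \<gamma> \<pi>
       \<and> 2 / (1 - \<gamma>) * Max ((\<lambda>s. bisim_metric P R P' R' \<gamma> s s) ` UNIV)
             + (1 + \<gamma>) / (1 - \<gamma>) * value_gap P' R' \<gamma> \<pi>
           \<le> 2 / (1 - \<gamma>)\<^sup>2 * Max ((\<lambda>s. d_TV P R P' R' \<gamma> s) ` UNIV)
             + (1 + \<gamma>) / (1 - \<gamma>) * value_gap P' R' \<gamma> \<pi>"
proof -
  interpret mdp_pair P R P' R' \<gamma>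
    using assms by unfold_locales auto
  let ?G = "value_gap P R \<gamma> \<pi>" and ?G' = "value_gap P' R' \<gamma> \<pi>"
  let ?\<delta> = "MAX s. bisim_metric P R P' R' \<gamma> s s" and ?D = "MAX s. d_TV P R P' R' \<gamma> s"
  have "0 \<le> \<gamma> * ?G'"
    using dt.value_gap_nonneg assms(1) by simp
  then have "(1 - \<gamma>) * ?G \<le> 2 * ?\<delta> + (1 + \<gamma>) * ?G'"
    using value_gap_le_bisim_metric[of \<pi>] by (simp add: distrib_right)
  then have "?G \<le> (2 * ?\<delta> + (1 + \<gamma>) * ?G') / (1 - \<gamma>)"
    using assms(2) by (simp add: pos_le_divide_eq mult.commute)
  also have "\<dots> = 2 / (1 - \<gamma>) * ?\<delta> + (1 + \<gamma>) / (1 - \<gamma>) * ?G'"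
    unfolding times_divide_eq_left by (rule add_divide_distrib)
  finally have gap_le: "?G \<le> 2 / (1 - \<gamma>) * ?\<delta> + (1 + \<gamma>) / (1 - \<gamma>) * ?G'" .
  have "?\<delta> \<le> ?D / (1 - \<gamma>)"
    using bisim_metric_diagonal_le_d_TV by (simp add: Max_le_iff)
  then have "2 / (1 - \<gamma>) * ?\<delta> \<le> 2 / (1 - \<gamma>) * (?D / (1 - \<gamma>))"
    by (rule mult_left_mono) (use assms(2) in simp)
  also have "\<dots> = 2 / (1 - \<gamma>)\<^sup>2 * ?D"
    by (simp add: power2_eq_square)
  finally have metric_term_le: "2 / (1 - \<gamma>) * ?\<delta> \<le> 2 / (1 - \<gamma>)\<^sup>2 * ?D" .
  show ?thesis
    using gap_le metric_term_le by simp
qed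

end
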